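(* Let $G$ be a group with elements $A,B,C,D$ such that $A$ commutes with $B$, $B$ commutes with $C$, $C$ commutes with $D$ and $D$ commutes with $A$. If neither of the subgroups $\langle A,C\rangle$ and $\langle B,D\rangle$ is soluble, then $G$ does not embed in $GL(3,\mathbb{F})$ for any field $\mathbb{F}$. *)

theory Defs
  imports "HOL-Analysis.Analysis" "HOL-Algebra.Solvable_Groups"
begin

definition GL3 :: "('f::field ^ 3 ^ 3) monoid" where
  "GL3 = \<lparr>carrier = {M. invertible M}, mult = (\<lambda>M N. M ** N), one = mat 1\<rparr>"

definition embeds_in :: "('a, 'c) monoid_scheme \<Rightarrow> ('b, 'd) monoid_scheme \<Rightarrow> bool" where
  "embeds_in G H \<longleftrightarrow> (\<exists>h. h \<in> hom G H \<and> inj_on h (carrier G))"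

end

theory Submission
  imports Defs
begin

text \<open>
  Let S and T be the images of \<open>\<langle>A, C\<rangle>\<close> and \<open>\<langle>B, D\<rangle>\<close> in GL(3,F); they commute elementwise.
  If S has no common eigenvector, every nonzero matrix commuting with S is invertible, and a linear
  dependence among \<open>v, xv, yv, xyv\<close> shows that any two such matrices commute, so T is abelian.
  Otherwise S fixes a line \<open>Fv\<close>. If some \<open>t \<in> T\<close> moves it, every element of S acts on \<open>v\<close> and
  \<open>tv\<close> by the same scalar, so S is triangularisable. If T fixes \<open>Fv\<close> as well, both groups are
  block triangular with blocks of sizes 1 and 2; the 2\<times>2 blocks of T commute with those of S,
  and the centraliser of a non-scalar 2\<times>2 matrix is commutative, so the blocks of S or of T
  commute. Triangular groups and block-triangular groups with commuting blocks are solvable.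
\<close>

section \<open>Derived subgroups and commuting subgroups\<close>

lemma (in group) derived_subset_subgroup:
  assumes "H \<subseteq> carrier G" "subgroup K G"
    and "\<And>a b. a \<in> H \<Longrightarrow> b \<in> H \<Longrightarrow> a \<otimes> b \<otimes> inv a \<otimes> inv b \<in> K"
  shows "derived G H \<subseteq> K"
  unfolding derived_def by (rule generate_subgroup_incl) (use assms in auto)

lemma (in group) commutator_eq_one:
  assumes "a \<in> carrier G" "b \<in> carrier G" "a \<otimes> b = b \<otimes> a"
  shows "a \<otimes> b \<otimes> inv a \<otimes> inv b = \<one>"
  using assms by (simp add: m_assoc)

lemma (in group) solvable_seq_if_commute:
  assumes H: "subgroup H G" and comm: "\<And>a b. a \<in> H \<Longrightarrow> b \<in> H \<Longrightarrow> a \<otimes> b = b \<otimes> a"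
  shows "solvable_seq G H"
proof (rule trivial_derived_seq_imp_solvable[OF H, of 1])
  have "derived G H \<subseteq> {\<one>}"
  proof (rule derived_subset_subgroup[OF subgroup.subset[OF H] triv_subgroup])
    fix a b assume "a \<in> H" "b \<in> H"
    then show "a \<otimes> b \<otimes> inv a \<otimes> inv b \<in> {\<one>}"
      using commutator_eq_one comm subgroup.mem_carrier[OF H] by blast
  qed
  moreover have "\<one> \<in> derived G H"
    using subgroup.one_closed[OF derived_is_subgroup[OF subgroup.subset[OF H]]] .
  ultimately show "(derived G ^^ 1) H = {\<one>}" by auto
qed

lemma (in group_hom) derived_subset_kernel:
  assumes S: "S \<subseteq> carrier G"
    and comm: "\<And>a b. a \<in> S \<Longrightarrow> b \<in> S \<Longrightarrow> h a \<otimes>\<^bsub>H\<^esub> h b = h b \<otimes>\<^bsub>H\<^esub> h a"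
  shows "derived G S \<subseteq> kernel G H h"
proof (rule G.derived_subset_subgroup[OF S subgroup_kernel])
  fix a b assume ab: "a \<in> S" "b \<in> S"
  then have "a \<in> carrier G" "b \<in> carrier G" using S by auto
  moreover have "h (a \<otimes> b \<otimes> inv a \<otimes> inv b) = h a \<otimes>\<^bsub>H\<^esub> h b \<otimes>\<^bsub>H\<^esub> inv\<^bsub>H\<^esub> h a \<otimes>\<^bsub>H\<^esub> inv\<^bsub>H\<^esub> h b"
    using calculation by simp
  moreover have "\<dots> = \<one>\<^bsub>H\<^esub>"
    using calculation comm[OF ab] by (intro H.commutator_eq_one) auto
  ultimately show "a \<otimes> b \<otimes> inv a \<otimes> inv b \<in> kernel G H h"
    by (simp add: kernel_def)
qed

lemma (in group) solvable_subgroup_if_solvable_seq: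
  assumes H: "subgroup H G" and sol: "solvable_seq G H"
  shows "solvable (G\<lparr>carrier := H\<rparr>)"
proof -
  obtain n where n: "(derived G ^^ n) H = {\<one>}"
    using solvable_imp_trivial_derived_seq[OF sol] by blast
  have sub: "(derived G ^^ m) H \<subseteq> H" for m
    by (induction m) (simp_all add: derived_incl[OF _ H])
  have "(derived (G\<lparr>carrier := H\<rparr>) ^^ m) H = (derived G ^^ m) H" for m
    by (induction m) (simp_all add: derived_consistent[OF sub H])
  then show ?thesis
    using group.solvable_iff_trivial_derived_seq[OF subgroup_imp_group[OF H]] n by auto
qed

lemma (in group) generate_commute:
  assumes X: "X \<subseteq> carrier G" and b: "b \<in> carrier G" and comm: "\<And>x. x \<in> X \<Longrightarrow> x \<otimes> b = b \<otimes> x"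
    and y: "y \<in> generate G X"
  shows "y \<otimes> b = b \<otimes> y"
  using y
proof (induction rule: generate.induct)
  case one then show ?case using b by simp
next
  case (incl h) then show ?case using comm by blast
next
  case (inv h)
  then have h: "h \<in> carrier G" using X by blast
  have "inv h \<otimes> b = inv h \<otimes> (b \<otimes> h) \<otimes> inv h" using h b by (simp add: m_assoc)
  also have "\<dots> = inv h \<otimes> (h \<otimes> b) \<otimes> inv h" using comm[OF inv] by simp
  also have "\<dots> = b \<otimes> inv h" using h b by (simp add: m_assoc [symmetric])
  finally show ?case .
next
  case (eng h1 h2)
  have "h1 \<in> carrier G" "h2 \<in> carrier G" using eng generate_in_carrier[OF X] by blast+
  with eng b show ?case by (metis m_assoc)
qed

lemma (in group) generate_commute_generate:
  assumes X: "X \<subseteq> carrier G" and Y: "Y \<subseteq> carrier G"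
    and comm: "\<And>x y. x \<in> X \<Longrightarrow> y \<in> Y \<Longrightarrow> x \<otimes> y = y \<otimes> x"
    and x: "x \<in> generate G X" and y: "y \<in> generate G Y"
  shows "x \<otimes> y = y \<otimes> x"
proof -
  have "x \<otimes> b = b \<otimes> x" if "b \<in> Y" for b
    using generate_commute[OF X _ _ x] that Y comm by blast
  then show ?thesis
    using generate_commute[OF Y generate_in_carrier[OF X x] _ y] by simp
qed

type_synonym 'f mat3 = "'f^3^3"

lemma GL3_simps [simp]:
  "carrier (GL3 :: 'f::field mat3 monoid) = {M. invertible M}"
  "M \<otimes>\<^bsub>GL3\<^esub> N = M ** N"
  "\<one>\<^bsub>GL3 :: 'f mat3 monoid\<^esub> = mat 1"
  by (simp_all add: GL3_def)

lemma invertible_mat_1: "invertible (mat 1 :: 'a::semiring_1^'n^'n)"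
  unfolding invertible_def by (rule exI[of _ "mat 1"]) simp

lemma group_GL3: "group (GL3 :: 'f::field mat3 monoid)"
proof (rule groupI)
  fix x y :: "'f mat3"
  assume "x \<in> carrier GL3"
  then obtain y where "x ** y = mat 1" "y ** x = mat 1" by (auto simp: invertible_def)
  then show "\<exists>y\<in>carrier GL3. y \<otimes>\<^bsub>GL3\<^esub> x = \<one>\<^bsub>GL3\<^esub>"
    by (auto simp: invertible_def)
qed (auto simp: invertible_mult invertible_mat_1 matrix_mul_assoc)

lemma GL3_inv:
  fixes M :: "'f::field mat3"
  assumes "invertible M"
  shows "M ** inv\<^bsub>GL3\<^esub> M = mat 1" "inv\<^bsub>GL3\<^esub> M ** M = mat 1"
  using group.r_inv[OF group_GL3] group.l_inv[OF group_GL3] assms by auto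

lemma group_hom_GL3_restrict:
  fixes f :: "'f::field mat3 \<Rightarrow> 'f mat3"
  assumes M: "subgroup M GL3"
    and mult: "\<And>x y. x \<in> M \<Longrightarrow> y \<in> M \<Longrightarrow> f (x ** y) = f x ** f y"
    and one: "f (mat 1) = mat 1"
  shows "group_hom (GL3\<lparr>carrier := M\<rparr>) GL3 f"
proof -
  have "invertible (f x)" if x: "x \<in> M" for x
  proof -
    have "inv\<^bsub>GL3\<^esub> x \<in> M" "invertible x" using subgroup.m_inv_closed[OF M x] subgroup.subset[OF M] x by auto
    then show ?thesis
      using mult[OF x] one GL3_inv invertible_right_inverse by metis
  qed
  then have "f \<in> hom (GL3\<lparr>carrier := M\<rparr>) GL3"
    by (auto simp: hom_def mult)
  then show ?thesis
    by (simp add: group_hom_def group_hom_axioms_def group_GL3 group.subgroup_imp_group[OF group_GL3 M])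
qed

lemma matrix_inv_cancel:
  fixes A :: "'a::semiring_1^'n^'n"
  assumes "invertible A"
  shows "A ** matrix_inv A = mat 1" "matrix_inv A ** A = mat 1"
  using someI_ex[OF assms[unfolded invertible_def]] by (simp_all add: matrix_inv_def)

definition conj_by :: "'f::field mat3 \<Rightarrow> 'f mat3 \<Rightarrow> 'f mat3" where
  "conj_by P M = matrix_inv P ** M ** P"

lemma conj_by_mult:
  assumes "invertible P"
  shows "conj_by P (M ** N) = conj_by P M ** conj_by P N"
proof -
  have "matrix_inv P ** M ** N ** P = matrix_inv P ** M ** (P ** matrix_inv P) ** N ** P"
    using matrix_inv_cancel[OF assms] by simp
  then show ?thesis by (simp add: conj_by_def matrix_mul_assoc)
qed

lemma conj_by_eigenvector:
  assumes "invertible P" "M *v (P *v u) = c *s (P *v u)"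
  shows "conj_by P M *v u = c *s u"
  using assms matrix_inv_cancel[OF assms(1)]
  by (simp add: conj_by_def vector_scalar_commute flip: matrix_vector_mul_assoc)
     (simp add: matrix_vector_mul_assoc)

lemma group_hom_conj_by:
  assumes "invertible P"
  shows "group_hom GL3 GL3 (conj_by P)"
proof -
  have "invertible (matrix_inv P)"
    using matrix_inv_cancel[OF assms] invertible_def by blast
  then have "conj_by P \<in> hom GL3 GL3"
    using assms by (auto simp: hom_def conj_by_mult) (auto simp: conj_by_def intro!: invertible_mult)
  then show ?thesis by (simp add: group_hom_def group_hom_axioms_def group_GL3)
qed

lemma inj_conj_by:
  assumes "invertible P"
  shows "inj (conj_by P)"
proof (rule injI)
  fix M N assume "conj_by P M = conj_by P N"
  then have "P ** conj_by P M ** matrix_inv P = P ** conj_by P N ** matrix_inv P" by simp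
  then show "M = N" using matrix_inv_cancel[OF assms]
    by (simp add: conj_by_def matrix_mul_assoc) (metis matrix_mul_assoc matrix_mul_rid)
qed

lemma solvable_seq_if_conj_by:
  assumes P: "invertible P" and S: "subgroup S (GL3 :: 'f::field mat3 monoid)"
    and "solvable_seq GL3 (conj_by P ` S)"
  shows "solvable_seq GL3 S"
  using group_hom.solvable_img_imp_solvable[OF group_hom_conj_by[OF P] S] inj_conj_by[OF P] assms(3)
  by (meson inj_on_subset subset_UNIV)

section \<open>Triangular and block-triangular subgroups\<close>

text \<open>\<open>M$i$j\<close> is the entry in row i and column j. Block triangular means that \<open>M\<close> maps the first
  basis vector to a multiple of itself; the diagonal blocks have sizes 1 and 2.\<close>

definition block_triangular :: "'f::field mat3 \<Rightarrow> bool" where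
  "block_triangular M \<longleftrightarrow> M$2$1 = 0 \<and> M$3$1 = 0"

definition upper_triangular :: "'f::field mat3 \<Rightarrow> bool" where
  "upper_triangular M \<longleftrightarrow> block_triangular M \<and> M$3$2 = 0"

definition block_diagonal :: "'f::field mat3 \<Rightarrow> 'f mat3" where
  "block_diagonal M = (\<chi> i j. if (i = 1) = (j = 1) then M$i$j else 0)"

definition diagonal_part :: "'f::field mat3 \<Rightarrow> 'f mat3" where
  "diagonal_part M = (\<chi> i j. if i = j then M$i$j else 0)"

lemma mat_1_entry: "(mat 1 :: 'f::field mat3)$i$j = (if i = j then 1 else 0)"
  by (simp add: mat_def)

lemma block_triangular_if_eigenvector:
  "M *v axis 1 1 = c *s axis 1 1 \<Longrightarrow> block_triangular M"
  by (simp add: block_triangular_def vec_eq_iff forall_3 matrix_vector_mult_def sum_3 axis_def)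

lemma upper_triangular_if_eigenvectors:
  "M *v axis 1 1 = c *s axis 1 1 \<Longrightarrow> M *v axis 2 1 = d *s axis 2 1 \<Longrightarrow> upper_triangular M"
  by (simp add: upper_triangular_def block_triangular_def vec_eq_iff forall_3 matrix_vector_mult_def
      sum_3 axis_def)

lemma block_triangular_mult:
  "block_triangular M \<Longrightarrow> block_triangular N \<Longrightarrow> block_triangular (M ** N)"
  by (simp add: block_triangular_def matrix_matrix_mult_def sum_3)

lemma upper_triangular_mult:
  "upper_triangular M \<Longrightarrow> upper_triangular N \<Longrightarrow> upper_triangular (M ** N)"
  by (simp add: upper_triangular_def block_triangular_def matrix_matrix_mult_def sum_3)

lemma block_triangular_inverse:
  fixes M N :: "'f::field mat3"
  assumes "N ** M = mat 1" "block_triangular M"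
  shows "block_triangular N"
proof -
  have "(N ** M)$i$j = (mat 1 :: 'f mat3)$i$j" for i j using assms(1) by simp
  from this[of 1 1] this[of 2 1] this[of 3 1] assms(2) show ?thesis
    by (auto simp: block_triangular_def matrix_matrix_mult_def sum_3 mat_1_entry)
qed

lemma upper_triangular_inverse:
  fixes M N :: "'f::field mat3"
  assumes "N ** M = mat 1" "upper_triangular M"
  shows "upper_triangular N"
proof -
  have bt: "block_triangular N"
    using assms block_triangular_inverse upper_triangular_def by blast
  have "(N ** M)$i$j = (mat 1 :: 'f mat3)$i$j" for i j using assms(1) by simp
  from this[of 2 2] this[of 3 2] assms(2) bt show ?thesis
    by (auto simp: upper_triangular_def block_triangular_def matrix_matrix_mult_def sum_3 mat_1_entry)
qed

lemma subgroup_GL3I: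
  fixes P :: "'f::field mat3 \<Rightarrow> bool"
  assumes one: "P (mat 1)" and mult: "\<And>M N. P M \<Longrightarrow> P N \<Longrightarrow> P (M ** N)"
    and inverse: "\<And>M N. N ** M = mat 1 \<Longrightarrow> P M \<Longrightarrow> P N"
  shows "subgroup {M. invertible M \<and> P M} GL3"
proof (rule group.subgroupI[OF group_GL3])
  fix M :: "'f mat3" assume M: "M \<in> {M. invertible M \<and> P M}"
  then have "inv\<^bsub>GL3\<^esub> M \<in> carrier GL3" using group.inv_closed[OF group_GL3, of M] by simp
  with M show "inv\<^bsub>GL3\<^esub> M \<in> {M. invertible M \<and> P M}"
    using GL3_inv inverse by auto
qed (use one invertible_mat_1 mult invertible_mult in auto)

lemma subgroup_block_triangular: "subgroup {M. invertible M \<and> block_triangular M} GL3"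
  by (rule subgroup_GL3I)
    (use block_triangular_mult block_triangular_inverse in \<open>auto simp: block_triangular_def mat_1_entry\<close>)

lemma subgroup_upper_triangular: "subgroup {M. invertible M \<and> upper_triangular M} GL3"
  by (rule subgroup_GL3I)
    (use upper_triangular_mult upper_triangular_inverse in
      \<open>auto simp: upper_triangular_def block_triangular_def mat_1_entry\<close>)

lemma block_diagonal_mult:
  "block_triangular M \<Longrightarrow> block_triangular N
    \<Longrightarrow> block_diagonal (M ** N) = block_diagonal M ** block_diagonal N"
  by (simp add: block_diagonal_def block_triangular_def vec_eq_iff forall_3 matrix_matrix_mult_def sum_3)

lemma diagonal_part_mult:
  "upper_triangular M \<Longrightarrow> upper_triangular N
    \<Longrightarrow> diagonal_part (M ** N) = diagonal_part M ** diagonal_part N"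
  by (simp add: diagonal_part_def upper_triangular_def block_triangular_def vec_eq_iff forall_3
      matrix_matrix_mult_def sum_3)

lemma block_diagonal_mat_1: "block_diagonal (mat 1) = mat 1"
  by (simp add: block_diagonal_def vec_eq_iff forall_3 mat_1_entry)

lemma diagonal_part_mat_1: "diagonal_part (mat 1) = mat 1"
  by (simp add: diagonal_part_def vec_eq_iff forall_3 mat_1_entry)

lemma commute_if_block_diagonal_eq_1:
  assumes "block_triangular M" "block_diagonal M = mat 1" "block_triangular N" "block_diagonal N = mat 1"
  shows "M ** N = N ** M"
proof -
  have "block_diagonal M $ i $ j = mat 1 $ i $ j" "block_diagonal N $ i $ j = mat 1 $ i $ j" for i j
    using assms by simp_all
  with assms show ?thesis
    by (simp add: block_diagonal_def block_triangular_def mat_1_entry vec_eq_iff forall_3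
        matrix_matrix_mult_def sum_3 add.commute)
qed

lemma diagonal_part_commute: "diagonal_part M ** diagonal_part N = diagonal_part N ** diagonal_part M"
  by (simp add: diagonal_part_def vec_eq_iff forall_3 matrix_matrix_mult_def sum_3 mult.commute)

lemma block_diagonal_commute_if_unitriangular:
  assumes "upper_triangular M" "diagonal_part M = mat 1" "upper_triangular N" "diagonal_part N = mat 1"
  shows "block_diagonal M ** block_diagonal N = block_diagonal N ** block_diagonal M"
proof -
  have "diagonal_part M $ i $ i = 1" "diagonal_part N $ i $ i = 1" for i
    using assms by (simp_all add: mat_1_entry)
  with assms show ?thesis
    by (simp add: diagonal_part_def block_diagonal_def upper_triangular_def block_triangular_def
        vec_eq_iff forall_3 matrix_matrix_mult_def sum_3 add.commute)
qed

text \<open>The derived subgroup lies in the kernel of \<open>block_diagonal\<close>, whose elements differ from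
  the identity only in the first row and therefore commute.\<close>

lemma solvable_seq_block_triangular:
  fixes S :: "'f::field mat3 set"
  assumes S: "subgroup S GL3" and bt: "\<And>M. M \<in> S \<Longrightarrow> block_triangular M"
    and comm: "\<And>M N. M \<in> S \<Longrightarrow> N \<in> S
      \<Longrightarrow> block_diagonal M ** block_diagonal N = block_diagonal N ** block_diagonal M"
  shows "solvable_seq GL3 S"
proof -
  let ?B = "{M :: 'f mat3. invertible M \<and> block_triangular M}"
  interpret GL3: group "GL3 :: 'f mat3 monoid" by (rule group_GL3)
  interpret bd: group_hom "GL3\<lparr>carrier := ?B\<rparr>" "GL3 :: 'f mat3 monoid" block_diagonal
    using subgroup_block_triangular block_diagonal_mult block_diagonal_mat_1
    by (intro group_hom_GL3_restrict) auto
  have SB: "S \<subseteq> ?B" using subgroup.subset[OF S] bt by auto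
  have "derived GL3 S \<subseteq> kernel (GL3\<lparr>carrier := ?B\<rparr>) GL3 block_diagonal"
    using bd.derived_subset_kernel[of S] SB comm GL3.derived_consistent[OF SB subgroup_block_triangular]
    by auto
  then have "M ** N = N ** M" if "M \<in> derived GL3 S" "N \<in> derived GL3 S" for M N
    using that commute_if_block_diagonal_eq_1 by (auto simp: kernel_def)
  then have "solvable_seq GL3 (derived GL3 S)"
    using GL3.derived_is_subgroup[OF subgroup.subset[OF S]] by (intro GL3.solvable_seq_if_commute) auto
  then show ?thesis using GL3.augment_solvable_seq[OF S] by blast
qed

lemma solvable_seq_upper_triangular:
  fixes S :: "'f::field mat3 set"
  assumes S: "subgroup S GL3" and ut: "\<And>M. M \<in> S \<Longrightarrow> upper_triangular M"
  shows "solvable_seq GL3 S"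
proof -
  let ?U = "{M :: 'f mat3. invertible M \<and> upper_triangular M}"
  interpret GL3: group "GL3 :: 'f mat3 monoid" by (rule group_GL3)
  interpret dg: group_hom "GL3\<lparr>carrier := ?U\<rparr>" "GL3 :: 'f mat3 monoid" diagonal_part
    using subgroup_upper_triangular diagonal_part_mult diagonal_part_mat_1
    by (intro group_hom_GL3_restrict) auto
  have SU: "S \<subseteq> ?U" using subgroup.subset[OF S] ut by auto
  have unitriangular: "derived GL3 S \<subseteq> kernel (GL3\<lparr>carrier := ?U\<rparr>) GL3 diagonal_part"
    using dg.derived_subset_kernel[of S] SU diagonal_part_commute
      GL3.derived_consistent[OF SU subgroup_upper_triangular]
    by auto
  have "solvable_seq GL3 (derived GL3 S)"
  proof (rule solvable_seq_block_triangular)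
    show "subgroup (derived GL3 S) GL3" using GL3.derived_is_subgroup[OF subgroup.subset[OF S]] .
  next
    fix M assume "M \<in> derived GL3 S"
    then show "block_triangular M" using unitriangular by (auto simp: kernel_def upper_triangular_def)
  next
    fix M N assume "M \<in> derived GL3 S" "N \<in> derived GL3 S"
    then show "block_diagonal M ** block_diagonal N = block_diagonal N ** block_diagonal M"
      using unitriangular block_diagonal_commute_if_unitriangular by (auto simp: kernel_def)
  qed
  then show ?thesis using GL3.augment_solvable_seq[OF S] by blast
qed

section \<open>Centralisers of 2\<times>2 blocks\<close>

definition scalar_block :: "'f::field mat3 \<Rightarrow> bool" where
  "scalar_block M \<longleftrightarrow> M$2$2 = M$3$3 \<and> M$2$3 = 0 \<and> M$3$2 = 0"

lemma block_diagonal_commute_if_scalar_block: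
  assumes "scalar_block M"
  shows "block_diagonal M ** block_diagonal N = block_diagonal N ** block_diagonal M"
  by (simp add: block_diagonal_def vec_eq_iff forall_3 matrix_matrix_mult_def sum_3)
    (use assms in \<open>simp add: scalar_block_def algebra_simps\<close>)

lemma block_diagonal_mult_entry:
  assumes "i \<noteq> 1" "j \<noteq> 1"
  shows "(block_diagonal M ** block_diagonal N)$i$j = M$i$2 * N$2$j + M$i$3 * (N$3$j :: 'f::field)"
proof -
  let ?M = "block_diagonal M" and ?N = "block_diagonal N"
  have "(?M ** ?N)$i$j = ?M$i$1 * ?N$1$j + ?M$i$2 * ?N$2$j + ?M$i$3 * ?N$3$j"
    by (simp add: matrix_matrix_mult_def sum_3)
  also have "\<dots> = M$i$2 * N$2$j + M$i$3 * N$3$j"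
    using assms by (simp add: block_diagonal_def)
  finally show ?thesis .
qed

text \<open>The hypotheses say that \<open>[[a', b'], [c', d']]\<close> commutes with the non-scalar matrix
  \<open>[[a, b], [c, d]]\<close>; the conclusion says that it is \<open>d' + l (X - d)\<close> for \<open>X\<close> the latter.\<close>

lemma commuting_2x2_proportional:
  fixes a b c d a' b' c' d' :: "'f::field"
  assumes nonscalar: "a \<noteq> d \<or> b \<noteq> 0 \<or> c \<noteq> 0"
    and E1: "b * c' = b' * c" and E2: "b' * (a - d) = b * (a' - d')" and E3: "c * (a' - d') = c' * (a - d)"
  shows "\<exists>l. b' = l * b \<and> c' = l * c \<and> a' = d' + l * (a - d)"
proof -
  consider "b \<noteq> 0" | "b = 0" "c \<noteq> 0" | "b = 0" "c = 0" "a - d \<noteq> 0"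
    using nonscalar by force
  then show ?thesis
  proof cases
    case 1
    with E1 E2 show ?thesis by (intro exI[of _ "b' / b"]) (simp add: field_simps)
  next
    case 2
    with E1 E3 show ?thesis by (intro exI[of _ "c' / c"]) (simp add: field_simps)
  next
    case 3
    with E2 E3 show ?thesis by (intro exI[of _ "(a' - d') / (a - d)"]) simp
  qed
qed

lemma block_diagonal_centralizer:
  fixes P Q :: "'f::field mat3"
  assumes P: "\<not> scalar_block P"
    and comm: "block_diagonal Q ** block_diagonal P = block_diagonal P ** block_diagonal Q"
  shows "\<exists>l. Q$2$3 = l * P$2$3 \<and> Q$3$2 = l * P$3$2 \<and> Q$2$2 = Q$3$3 + l * (P$2$2 - P$3$3)"
proof (rule commuting_2x2_proportional)
  show "P$2$2 \<noteq> P$3$3 \<or> P$2$3 \<noteq> 0 \<or> P$3$2 \<noteq> 0" using P by (auto simp: scalar_block_def)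
  have "Q$i$2 * P$2$j + Q$i$3 * P$3$j = P$i$2 * Q$2$j + P$i$3 * Q$3$j" if "i \<noteq> 1" "j \<noteq> 1" for i j
    using arg_cong[OF comm, of "\<lambda>M. M$i$j"] that by (simp add: block_diagonal_mult_entry)
  from this[of 2 2] this[of 2 3] this[of 3 2]
  show "P$2$3 * Q$3$2 = Q$2$3 * P$3$2"
    and "Q$2$3 * (P$2$2 - P$3$3) = P$2$3 * (Q$2$2 - Q$3$3)"
    and "P$3$2 * (Q$2$2 - Q$3$3) = Q$3$2 * (P$2$2 - P$3$3)"
    by (simp_all add: algebra_simps)
qed

lemma block_diagonal_centralizer_commute:
  fixes P Q R :: "'f::field mat3"
  assumes P: "\<not> scalar_block P"
    and Q: "block_diagonal Q ** block_diagonal P = block_diagonal P ** block_diagonal Q"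
    and R: "block_diagonal R ** block_diagonal P = block_diagonal P ** block_diagonal R"
  shows "block_diagonal Q ** block_diagonal R = block_diagonal R ** block_diagonal Q"
proof -
  obtain l where l: "Q$2$3 = l * P$2$3" "Q$3$2 = l * P$3$2" "Q$2$2 = Q$3$3 + l * (P$2$2 - P$3$3)"
    using block_diagonal_centralizer[OF P Q] by blast
  obtain m where m: "R$2$3 = m * P$2$3" "R$3$2 = m * P$3$2" "R$2$2 = R$3$3 + m * (P$2$2 - P$3$3)"
    using block_diagonal_centralizer[OF P R] by blast
  show ?thesis
    by (simp add: vec_eq_iff forall_3 block_diagonal_def matrix_matrix_mult_def sum_3)
      (simp add: l m algebra_simps)
qed

lemma solvable_seq_commuting_block_triangular:
  fixes S T :: "'f::field mat3 set"
  assumes S: "subgroup S GL3" and T: "subgroup T GL3"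
    and bt: "\<And>M. M \<in> S \<union> T \<Longrightarrow> block_triangular M"
    and comm: "\<And>M N. M \<in> S \<Longrightarrow> N \<in> T \<Longrightarrow> M ** N = N ** M"
  shows "solvable_seq GL3 S \<or> solvable_seq GL3 T"
proof (cases "\<forall>M\<in>S. scalar_block M")
  case True
  then have "solvable_seq GL3 S"
    using bt block_diagonal_commute_if_scalar_block by (intro solvable_seq_block_triangular[OF S]) auto
  then show ?thesis ..
next
  case False
  then obtain P where P: "P \<in> S" "\<not> scalar_block P" by blast
  have P_central: "block_diagonal N ** block_diagonal P = block_diagonal P ** block_diagonal N"
    if N: "N \<in> T" for N
  proof -
    have "block_triangular N" "block_triangular P" using bt N P(1) by auto
    then show ?thesis using comm[OF P(1) N] by (simp flip: block_diagonal_mult)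
  qed
  have "solvable_seq GL3 T"
  proof (rule solvable_seq_block_triangular[OF T])
    show "block_triangular M" if "M \<in> T" for M using bt that by blast
    show "block_diagonal M ** block_diagonal N = block_diagonal N ** block_diagonal M"
      if "M \<in> T" "N \<in> T" for M N
      using block_diagonal_centralizer_commute[OF P(2)] P_central that by blast
  qed
  then show ?thesis ..
qed

section \<open>Centralisers without a common eigenvector\<close>

definition matrix_centralizer :: "'f::field mat3 set \<Rightarrow> 'f mat3 set" where
  "matrix_centralizer S = {M. \<forall>s\<in>S. M ** s = s ** M}"

definition common_eigenvector :: "'f::field mat3 set \<Rightarrow> 'f^3 \<Rightarrow> bool" where
  "common_eigenvector S v \<longleftrightarrow> v \<noteq> 0 \<and> (\<forall>s\<in>S. \<exists>c. s *v v = c *s v)"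

lemma mat_mult_commute: "mat c ** (M :: 'f::field mat3) = M ** mat c"
  by (simp add: vec_eq_iff forall_3 sum_3 matrix_matrix_mult_def mat_def)

lemma mat_mult_mat: "mat p ** mat q = (mat (p * q) :: 'f::field mat3)"
  by (simp add: vec_eq_iff forall_3 sum_3 matrix_matrix_mult_def mat_def)

lemma mat_mult_vector: "(mat c :: 'f::field mat3) *v v = c *s v"
  by (simp add: vec_eq_iff forall_3 sum_3 matrix_vector_mult_def mat_def)

lemma mat_eq_0_iff: "(mat c :: 'f::field mat3) = 0 \<longleftrightarrow> c = 0"
  by (simp add: vec_eq_iff forall_3 mat_def)

lemma matrix_add_rdistrib: "(A + B) ** C = A ** C + B ** (C :: 'f::field mat3)"
  by (simp add: matrix_matrix_mult_def vec_eq_iff sum.distrib algebra_simps)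

lemma mat_in_matrix_centralizer: "mat c \<in> matrix_centralizer S"
  by (simp add: matrix_centralizer_def mat_mult_commute)

lemma matrix_centralizer_add:
  "M \<in> matrix_centralizer S \<Longrightarrow> N \<in> matrix_centralizer S \<Longrightarrow> M + N \<in> matrix_centralizer S"
  by (simp add: matrix_centralizer_def matrix_add_ldistrib matrix_add_rdistrib)

lemma matrix_centralizer_mult:
  "M \<in> matrix_centralizer S \<Longrightarrow> N \<in> matrix_centralizer S \<Longrightarrow> M ** N \<in> matrix_centralizer S"
  by (simp add: matrix_centralizer_def flip: matrix_mul_assoc) (simp add: matrix_mul_assoc)

definition matrix_of_columns :: "'f::field^3 \<Rightarrow> 'f^3 \<Rightarrow> 'f^3 \<Rightarrow> 'f mat3" where
  "matrix_of_columns a b c = (\<chi> i j. if j = 1 then a$i else if j = 2 then b$i else c$i)"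

lemma matrix_of_columns_mult_vector:
  "matrix_of_columns a b c *v v = v$1 *s a + v$2 *s b + v$3 *s c"
  by (simp add: matrix_of_columns_def matrix_vector_mult_def vec_eq_iff sum_3 algebra_simps)

lemma matrix_of_columns_mult_axis:
  "matrix_of_columns a b c *v axis 1 1 = a" "matrix_of_columns a b c *v axis 2 1 = b"
  by (simp_all add: matrix_of_columns_mult_vector axis_def)

lemma det_matrix_of_columns:
  "det (matrix_of_columns a b c) = a$1 * b$2 * c$3 + b$1 * c$2 * a$3 + c$1 * a$2 * b$3
    - a$1 * c$2 * b$3 - b$1 * a$2 * c$3 - c$1 * b$2 * a$3"
  by (simp add: det_3 matrix_of_columns_def)

lemma three_vectors_dependent_or_spanning:
  fixes a b c :: "'f::field^3"
  shows "(\<exists>x y z. (x, y, z) \<noteq> (0, 0, 0) \<and> x *s a + y *s b + z *s c = 0)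
    \<or> (\<forall>w. \<exists>x y z. w = x *s a + y *s b + z *s c)"
proof (cases "\<forall>v. matrix_of_columns a b c *v v = 0 \<longrightarrow> v = 0")
  case True
  then have "invertible (matrix_of_columns a b c)"
    using matrix_left_invertible_ker invertible_left_inverse by blast
  then obtain Q where "matrix_of_columns a b c ** Q = mat 1" unfolding invertible_def by blast
  then have "\<forall>w. matrix_of_columns a b c *v (Q *v w) = w" by (simp add: matrix_vector_mul_assoc)
  then show ?thesis using matrix_of_columns_mult_vector by metis
next
  case False
  then obtain v where v: "matrix_of_columns a b c *v v = 0" "v \<noteq> 0" by blast
  then have "(v$1, v$2, v$3) \<noteq> (0, 0, 0)" by (auto simp: vec_eq_iff forall_3)
  then show ?thesis using matrix_of_columns_mult_vector v by metis
qed

lemma four_vectors_dependent: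
  fixes a b c d :: "'f::field^3"
  shows "\<exists>x y z u. (x, y, z, u) \<noteq> (0, 0, 0, 0) \<and> x *s a + y *s b + z *s c + u *s d = 0"
  using three_vectors_dependent_or_spanning[of a b c]
proof
  assume "\<exists>x y z. (x, y, z) \<noteq> (0, 0, 0) \<and> x *s a + y *s b + z *s c = 0"
  then obtain x y z where "(x, y, z) \<noteq> (0, 0, 0)" "x *s a + y *s b + z *s c = 0" by blast
  then have "(x, y, z, 0) \<noteq> (0, 0, 0, 0) \<and> x *s a + y *s b + z *s c + 0 *s d = 0" by auto
  then show ?thesis by blast
next
  assume "\<forall>w. \<exists>x y z. w = x *s a + y *s b + z *s c"
  then obtain x y z where "d = x *s a + y *s b + z *s c" by blast
  then have "(x, y, z, - 1 :: 'f) \<noteq> (0, 0, 0, 0) \<and> x *s a + y *s b + z *s c + (-1) *s d = 0"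
    by (simp add: vec_eq_iff)
  then show ?thesis by blast
qed

lemma matrix_image_line_if_kernel_plane:
  fixes M :: "'f::field mat3"
  assumes v: "M *v v = 0" "v \<noteq> 0" and w: "M *v w = 0" "\<And>c. w \<noteq> c *s v"
    and u0: "M *v u0 \<noteq> 0"
  shows "\<exists>z. M *v u = z *s (M *v u0)"
  using three_vectors_dependent_or_spanning[of v w u0]
proof
  assume "\<exists>x y z. (x, y, z) \<noteq> (0, 0, 0) \<and> x *s v + y *s w + z *s u0 = 0"
  then obtain x y z where xyz: "(x, y, z) \<noteq> (0, 0, 0)" "x *s v + y *s w + z *s u0 = 0" by blast
  have "z *s (M *v u0) = M *v (x *s v + y *s w + z *s u0)"
    using v w by (simp add: matrix_vector_right_distrib vector_scalar_commute)
  then have "z = 0" using xyz u0 by simp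
  show ?thesis
  proof (cases "y = 0")
    case True
    then show ?thesis using xyz \<open>z = 0\<close> v by auto
  next
    case False
    then have "w = (- x / y) *s v" using xyz \<open>z = 0\<close>
      by (simp add: vec_eq_iff field_simps) (metis add_eq_0_iff)
    then show ?thesis using w by blast
  qed
next
  assume "\<forall>u. \<exists>x y z. u = x *s v + y *s w + z *s u0"
  then obtain x y z where "u = x *s v + y *s w + z *s u0" by blast
  then have "M *v u = z *s (M *v u0)"
    using v w by (simp add: matrix_vector_right_distrib vector_scalar_commute)
  then show ?thesis by blast
qed

lemma common_eigenvector_if_image_line:
  fixes M :: "'f::field mat3"
  assumes M: "M \<in> matrix_centralizer S" and u0: "M *v u0 \<noteq> 0"
    and line: "\<And>u. \<exists>z. M *v u = z *s (M *v u0)"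
  shows "common_eigenvector S (M *v u0)"
  unfolding common_eigenvector_def
proof (intro conjI ballI)
  fix s assume "s \<in> S"
  then have "s *v (M *v u0) = M *v (s *v u0)"
    using M by (simp add: matrix_centralizer_def matrix_vector_mul_assoc)
  then show "\<exists>c. s *v (M *v u0) = c *s (M *v u0)" using line by metis
qed (rule u0)

text \<open>Kernel and image of \<open>M\<close> are invariant under S. A kernel vector that is not a common
  eigenvector yields a second, independent kernel vector, so the image is an invariant line.\<close>

lemma invertible_if_no_common_eigenvector:
  fixes M :: "'f::field mat3"
  assumes none: "\<nexists>v. common_eigenvector S v"
    and M: "M \<in> matrix_centralizer S" "M \<noteq> 0"
  shows "invertible M"
proof (rule ccontr)
  assume "\<not> invertible M"
  then obtain v where v: "M *v v = 0" "v \<noteq> 0"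
    using matrix_left_invertible_ker invertible_left_inverse by blast
  then obtain s where s: "s \<in> S" "\<And>c. s *v v \<noteq> c *s v"
    using none unfolding common_eigenvector_def by blast
  have "M *v (s *v v) = s *v (M *v v)"
    using M(1) s(1) by (simp add: matrix_centralizer_def matrix_vector_mul_assoc)
  then have sv: "M *v (s *v v) = 0" using v by simp
  obtain u0 where u0: "M *v u0 \<noteq> 0" using M(2) matrix_eq[of M 0] by auto
  have "common_eigenvector S (M *v u0)"
    using common_eigenvector_if_image_line[OF M(1) u0] matrix_image_line_if_kernel_plane[OF v sv s(2) u0] .
  then show False using none by blast
qed

lemma commute_if_linear_relation:
  fixes x y :: "'f::field mat3"
  assumes "(a, b) \<noteq> (0, 0)" "mat a + mat b ** x = 0"
  shows "x ** y = y ** x"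
proof -
  have "b \<noteq> 0" using assms mat_eq_0_iff by fastforce
  have "mat (1 / b) ** (mat a + mat b ** x) = 0" using assms by simp
  then have "mat (a / b) + x = 0"
    using \<open>b \<noteq> 0\<close> by (simp add: matrix_add_ldistrib mat_mult_mat matrix_mul_assoc)
  then have "x = mat (- (a / b))"
    by (simp add: add_eq_0_iff vec_eq_iff mat_def)
  then show ?thesis by (simp add: mat_mult_commute)
qed

text \<open>An element of the centraliser killing a nonzero vector vanishes. A dependence among
  \<open>v, xv, yv, xyv\<close> therefore gives \<open>a + c y = 0\<close> with \<open>a, c\<close> linear in \<open>x\<close>: either \<open>c\<close> is
  invertible and \<open>y\<close> commutes with \<open>x\<close>, or \<open>x\<close> is scalar.\<close>

lemma matrix_centralizer_commutative:
  fixes x y :: "'f::field mat3"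
  assumes none: "\<nexists>v. common_eigenvector S v"
    and x: "x \<in> matrix_centralizer S" and y: "y \<in> matrix_centralizer S"
  shows "x ** y = y ** x"
proof -
  have zero_if_kernel: "N = 0" if N: "N \<in> matrix_centralizer S" "N *v u = 0" "u \<noteq> 0" for N u
  proof (rule ccontr)
    assume "N \<noteq> 0"
    then obtain N' where "N' ** N = mat 1"
      using invertible_if_no_common_eigenvector[OF none N(1)] invertible_def by blast
    then have "N' *v (N *v u) = u" by (simp add: matrix_vector_mul_assoc)
    then show False using N by simp
  qed
  define v :: "'f^3" where "v = axis 1 1"
  obtain \<alpha> \<beta> \<gamma> \<delta> where nz: "(\<alpha>, \<beta>, \<gamma>, \<delta>) \<noteq> (0, 0, 0, 0)"
    and dep: "\<alpha> *s v + \<beta> *s (x *v v) + \<gamma> *s (y *v v) + \<delta> *s ((x ** y) *v v) = 0"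
    using four_vectors_dependent[of v "x *v v" "y *v v" "(x ** y) *v v"] by blast
  define a where "a = mat \<alpha> + mat \<beta> ** x"
  define c where "c = mat \<gamma> + mat \<delta> ** x"
  have central: "a \<in> matrix_centralizer S" "c \<in> matrix_centralizer S"
    unfolding a_def c_def
    by (intro matrix_centralizer_add matrix_centralizer_mult mat_in_matrix_centralizer x)+
  have "(a + c ** y) *v v = 0"
    using dep by (simp add: a_def c_def matrix_add_rdistrib matrix_vector_mult_add_rdistrib
        mat_mult_vector add.assoc flip: matrix_vector_mul_assoc)
  then have rel: "a + c ** y = 0"
    using central y by (intro zero_if_kernel[of _ v] matrix_centralizer_add matrix_centralizer_mult)
      (auto simp: v_def)
  have "(mat p + mat q ** x) ** x = x ** (mat p + mat q ** x)" for p q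
    by (simp add: matrix_add_ldistrib matrix_add_rdistrib mat_mult_commute matrix_mul_assoc)
      (metis mat_mult_commute matrix_mul_assoc)
  then have ax: "a ** x = x ** a" and cx: "c ** x = x ** c" by (simp_all add: a_def c_def)
  show ?thesis
  proof (cases "c = 0")
    case True
    then have "a = 0" using rel by simp
    show ?thesis
    proof (cases "(\<gamma>, \<delta>) = (0, 0)")
      case True
      then show ?thesis using nz \<open>a = 0\<close> commute_if_linear_relation by (auto simp: a_def)
    next
      case False
      then show ?thesis using \<open>c = 0\<close> commute_if_linear_relation by (auto simp: c_def)
    qed
  next
    case False
    then obtain c' where c': "c' ** c = mat 1"
      using invertible_if_no_common_eigenvector[OF none central(2)] invertible_def by blast
    have "c ** (x ** y) + x ** a = x ** (c ** y + a)"
      by (simp add: matrix_add_ldistrib cx matrix_mul_assoc)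
    moreover have "c ** (y ** x) + a ** x = (c ** y + a) ** x"
      by (simp add: matrix_add_rdistrib matrix_mul_assoc)
    ultimately have "c ** (x ** y) = c ** (y ** x)"
      using rel ax by (metis add.commute add_right_cancel times0_left times0_right)
    then have "c' ** c ** (x ** y) = c' ** c ** (y ** x)" by (simp flip: matrix_mul_assoc)
    then show ?thesis using c' by simp
  qed
qed

section \<open>Commuting subgroups of GL(3, F)\<close>

lemma exists_invertible_first_column:
  fixes v :: "'f::field^3"
  assumes "v \<noteq> 0"
  shows "\<exists>P :: 'f mat3. invertible P \<and> P *v axis 1 1 = v"
proof -
  have det: "det (matrix_of_columns v (axis 2 1) (axis 3 1)) = v$1"
    "det (matrix_of_columns v (axis 1 1) (axis 3 1)) = - v$2"
    "det (matrix_of_columns v (axis 1 1) (axis 2 1)) = v$3"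
    by (simp_all add: det_matrix_of_columns axis_def)
  have "v$1 \<noteq> 0 \<or> v$2 \<noteq> 0 \<or> v$3 \<noteq> 0" using assms by (auto simp: vec_eq_iff forall_3)
  then obtain b c where "invertible (matrix_of_columns v b c)"
    using det by (metis invertible_det_nz neg_equal_0_iff_equal)
  then show ?thesis using matrix_of_columns_mult_axis by blast
qed

lemma exists_invertible_fixing_first_column:
  fixes w :: "'f::field^3"
  assumes "w$2 \<noteq> 0 \<or> w$3 \<noteq> 0"
  shows "\<exists>Q :: 'f mat3. invertible Q \<and> Q *v axis 1 1 = axis 1 1 \<and> Q *v axis 2 1 = w"
proof -
  have det: "det (matrix_of_columns (axis 1 1) w (axis 3 1)) = w$2"
    "det (matrix_of_columns (axis 1 1) w (axis 2 1)) = - w$3"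
    by (simp_all add: det_matrix_of_columns axis_def)
  obtain c where "invertible (matrix_of_columns (axis 1 1) w c)"
    using assms det by (metis invertible_det_nz neg_equal_0_iff_equal)
  then show ?thesis using matrix_of_columns_mult_axis by blast
qed

lemma exists_invertible_first_columns:
  fixes v w :: "'f::field^3"
  assumes v: "v \<noteq> 0" and w: "\<And>c. w \<noteq> c *s v"
  shows "\<exists>P :: 'f mat3. invertible P \<and> P *v axis 1 1 = v \<and> P *v axis 2 1 = w"
proof -
  obtain P0 :: "'f mat3" where P0: "invertible P0" "P0 *v axis 1 1 = v"
    using exists_invertible_first_column[OF v] by blast
  define w' where "w' = matrix_inv P0 *v w"
  have P0w': "P0 *v w' = w"
    using matrix_inv_cancel(1)[OF P0(1)] by (simp add: w'_def matrix_vector_mul_assoc)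
  have "w'$2 \<noteq> 0 \<or> w'$3 \<noteq> 0"
  proof (rule ccontr)
    assume "\<not> (w'$2 \<noteq> 0 \<or> w'$3 \<noteq> 0)"
    then have "w' = w'$1 *s axis 1 1" by (auto simp: vec_eq_iff forall_3 axis_def)
    then have "w = w'$1 *s v" using P0w' P0(2) by (metis vector_scalar_commute)
    then show False using w by blast
  qed
  then obtain Q :: "'f mat3" where Q: "invertible Q" "Q *v axis 1 1 = axis 1 1" "Q *v axis 2 1 = w'"
    using exists_invertible_fixing_first_column by blast
  have "invertible (P0 ** Q)" "(P0 ** Q) *v axis 1 1 = v" "(P0 ** Q) *v axis 2 1 = w"
    using P0 Q P0w' invertible_mult by (auto simp flip: matrix_vector_mul_assoc)
  then show ?thesis by blast
qed

lemma solvable_seq_if_no_common_eigenvector: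
  fixes S T :: "'f::field mat3 set"
  assumes T: "subgroup T GL3" and central: "T \<subseteq> matrix_centralizer S"
    and none: "\<nexists>v. common_eigenvector S v"
  shows "solvable_seq GL3 T"
  using T central matrix_centralizer_commutative[OF none]
  by (intro group.solvable_seq_if_commute[OF group_GL3]) auto

text \<open>Since \<open>t\<close> commutes with S, each element of S acts on \<open>t v\<close> by the same scalar as on \<open>v\<close>;
  in a basis starting with \<open>v, t v\<close> the group S is upper triangular.\<close>

lemma solvable_seq_if_eigenvector_moved:
  fixes S :: "'f::field mat3 set"
  assumes S: "subgroup S GL3" and v: "common_eigenvector S v"
    and t: "t \<in> matrix_centralizer S" and moved: "\<And>c. t *v v \<noteq> c *s v"
  shows "solvable_seq GL3 S"
proof -
  obtain P :: "'f mat3" where P: "invertible P" "P *v axis 1 1 = v" "P *v axis 2 1 = t *v v"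
    using exists_invertible_first_columns v moved by (metis common_eigenvector_def)
  have "upper_triangular (conj_by P M)" if M: "M \<in> S" for M
  proof -
    obtain c where c: "M *v v = c *s v" using v M by (auto simp: common_eigenvector_def)
    have "M *v (t *v v) = t *v (M *v v)"
      using t M by (simp add: matrix_centralizer_def matrix_vector_mul_assoc)
    then have tv: "M *v (t *v v) = c *s (t *v v)" using c by (simp add: vector_scalar_commute)
    show ?thesis
    proof (rule upper_triangular_if_eigenvectors)
      show "conj_by P M *v axis 1 1 = c *s axis 1 1"
        by (rule conj_by_eigenvector[OF P(1)]) (simp add: P c)
      show "conj_by P M *v axis 2 1 = c *s axis 2 1"
        by (rule conj_by_eigenvector[OF P(1)]) (simp add: P tv)
    qed
  qed
  then have "solvable_seq GL3 (conj_by P ` S)"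
    using group_hom.subgroup_img_is_subgroup[OF group_hom_conj_by[OF P(1)] S]
    by (intro solvable_seq_upper_triangular) auto
  then show ?thesis using solvable_seq_if_conj_by[OF P(1) S] by blast
qed

lemma solvable_seq_if_shared_eigenvector:
  fixes S T :: "'f::field mat3 set"
  assumes S: "subgroup S GL3" and T: "subgroup T GL3"
    and comm: "\<And>M N. M \<in> S \<Longrightarrow> N \<in> T \<Longrightarrow> M ** N = N ** M"
    and v: "common_eigenvector (S \<union> T) v"
  shows "solvable_seq GL3 S \<or> solvable_seq GL3 T"
proof -
  obtain P :: "'f mat3" where P: "invertible P" "P *v axis 1 1 = v"
    using exists_invertible_first_column v by (metis common_eigenvector_def)
  interpret conj: group_hom GL3 GL3 "conj_by P" by (rule group_hom_conj_by[OF P(1)])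
  have "solvable_seq GL3 (conj_by P ` S) \<or> solvable_seq GL3 (conj_by P ` T)"
  proof (rule solvable_seq_commuting_block_triangular)
    show "subgroup (conj_by P ` S) GL3" "subgroup (conj_by P ` T) GL3"
      using conj.subgroup_img_is_subgroup S T by auto
    show "block_triangular M" if M: "M \<in> conj_by P ` S \<union> conj_by P ` T" for M
    proof -
      obtain N where N: "N \<in> S \<union> T" "M = conj_by P N" using M by blast
      obtain c where "N *v v = c *s v"
        using v N(1) by (auto simp: common_eigenvector_def)
      then have "conj_by P N *v axis 1 1 = c *s axis 1 1"
        by (intro conj_by_eigenvector[OF P(1)]) (simp add: P)
      then show ?thesis unfolding N(2) by (rule block_triangular_if_eigenvector)
    qed
    show "M ** N = N ** M" if MN: "M \<in> conj_by P ` S" "N \<in> conj_by P ` T" for M N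
    proof -
      obtain M0 N0 where "M0 \<in> S" "N0 \<in> T" "M = conj_by P M0" "N = conj_by P N0"
        using MN by blast
      then show ?thesis using comm[of M0 N0] by (simp flip: conj_by_mult[OF P(1)])
    qed
  qed
  then show ?thesis using solvable_seq_if_conj_by[OF P(1)] S T by blast
qed

lemma solvable_seq_commuting_subgroups_GL3:
  fixes S T :: "'f::field mat3 set"
  assumes S: "subgroup S GL3" and T: "subgroup T GL3"
    and comm: "\<And>M N. M \<in> S \<Longrightarrow> N \<in> T \<Longrightarrow> M ** N = N ** M"
  shows "solvable_seq GL3 S \<or> solvable_seq GL3 T"
proof -
  have central: "T \<subseteq> matrix_centralizer S" using comm by (auto simp: matrix_centralizer_def)
  show ?thesis
  proof (cases "\<exists>v. common_eigenvector S v")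
    case False
    then show ?thesis using solvable_seq_if_no_common_eigenvector[OF T central] by blast
  next
    case True
    then obtain v where v: "common_eigenvector S v" by blast
    show ?thesis
    proof (cases "\<forall>t\<in>T. \<exists>c. t *v v = c *s v")
      case True
      then have "common_eigenvector (S \<union> T) v" using v by (auto simp: common_eigenvector_def)
      then show ?thesis using solvable_seq_if_shared_eigenvector[OF S T comm] by blast
    next
      case False
      then obtain t where "t \<in> T" "\<And>c. t *v v \<noteq> c *s v" by blast
      then show ?thesis using solvable_seq_if_eigenvector_moved[OF S v] central by blast
    qed
  qed
qed

lemma solvable_if_commuting_subgroups_embed_GL3:
  fixes G :: "('g, 'b) monoid_scheme"
  assumes G: "group G" and h: "h \<in> hom G (GL3 :: 'f::field mat3 monoid)" "inj_on h (carrier G)"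
    and H: "subgroup H1 G" "subgroup H2 G"
    and comm: "\<And>x y. x \<in> H1 \<Longrightarrow> y \<in> H2 \<Longrightarrow> x \<otimes>\<^bsub>G\<^esub> y = y \<otimes>\<^bsub>G\<^esub> x"
  shows "solvable (G\<lparr>carrier := H1\<rparr>) \<or> solvable (G\<lparr>carrier := H2\<rparr>)"
proof -
  interpret G: group G by (rule G)
  interpret h: group_hom G "GL3 :: 'f mat3 monoid" h
    using h(1) group_GL3 by (simp add: group_hom_def group_hom_axioms_def G.group_axioms)
  have "h x ** h y = h y ** h x" if "x \<in> H1" "y \<in> H2" for x y
  proof -
    have "x \<in> carrier G" "y \<in> carrier G"
      using subgroup.mem_carrier[OF H(1) that(1)] subgroup.mem_carrier[OF H(2) that(2)] .
    moreover have "h (x \<otimes>\<^bsub>G\<^esub> y) = h (y \<otimes>\<^bsub>G\<^esub> x)" using comm[OF that] by simp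
    ultimately show ?thesis by simp
  qed
  then have "solvable_seq GL3 (h ` H1) \<or> solvable_seq GL3 (h ` H2)"
    by (intro solvable_seq_commuting_subgroups_GL3 h.subgroup_img_is_subgroup H) auto
  moreover have "inj_on h H1" "inj_on h H2"
    using inj_on_subset[OF h(2) subgroup.subset[OF H(1)]] inj_on_subset[OF h(2) subgroup.subset[OF H(2)]] .
  ultimately have "solvable_seq G H1 \<or> solvable_seq G H2"
    using h.solvable_img_imp_solvable[OF H(1)] h.solvable_img_imp_solvable[OF H(2)] by blast
  then show ?thesis
    using G.solvable_subgroup_if_solvable_seq[OF H(1)] G.solvable_subgroup_if_solvable_seq[OF H(2)] by blast
qed

theorem theorem2p3:
  fixes G :: "('g, 'b) monoid_scheme" and A B C D :: 'g
  assumes "group G"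
    and "A \<in> carrier G" "B \<in> carrier G" "C \<in> carrier G" "D \<in> carrier G"
    and "A \<otimes>\<^bsub>G\<^esub> B = B \<otimes>\<^bsub>G\<^esub> A"
    and "B \<otimes>\<^bsub>G\<^esub> C = C \<otimes>\<^bsub>G\<^esub> B"
    and "C \<otimes>\<^bsub>G\<^esub> D = D \<otimes>\<^bsub>G\<^esub> C"
    and "D \<otimes>\<^bsub>G\<^esub> A = A \<otimes>\<^bsub>G\<^esub> D"
    and "\<not> solvable (G\<lparr>carrier := generate G {A, C}\<rparr>)"
    and "\<not> solvable (G\<lparr>carrier := generate G {B, D}\<rparr>)"
  shows "\<not> embeds_in G (GL3 :: ('f::field ^ 3 ^ 3) monoid)"
proof
  assume "embeds_in G (GL3 :: ('f::field ^ 3 ^ 3) monoid)"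
  then obtain h where h: "h \<in> hom G (GL3 :: 'f mat3 monoid)" "inj_on h (carrier G)"
    unfolding embeds_in_def by blast
  interpret G: group G by fact
  have gens: "{A, C} \<subseteq> carrier G" "{B, D} \<subseteq> carrier G" using assms(2-5) by auto
  have "x \<otimes>\<^bsub>G\<^esub> y = y \<otimes>\<^bsub>G\<^esub> x" if "x \<in> generate G {A, C}" "y \<in> generate G {B, D}" for x y
  proof (rule G.generate_commute_generate[OF gens _ that])
    show "a \<otimes>\<^bsub>G\<^esub> b = b \<otimes>\<^bsub>G\<^esub> a" if "a \<in> {A, C}" "b \<in> {B, D}" for a b
      using that by (auto simp: assms(6-8) assms(9)[symmetric])
  qed
  then show False
    using solvable_if_commuting_subgroups_embed_GL3[OF assms(1) h] assms(10,11)
      G.generate_is_subgroup[OF gens(1)] G.generate_is_subgroup[OF gens(2)] by blast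
qed

end
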